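(* Let $\varepsilon_n\downarrow0$. For each $n$ let $\mu_n$ be a QSD for $p^{\varepsilon_n}$ with eigenvalue $\lambda_n$. Suppose $\mu_n\to\mu$ weakly as Borel probability measures on $M$, and suppose $\lim_{n\to\infty}\lambda_n=1$. Then $\mu$ is $F$-invariant, and $\mu$ is supported by the closure of $\mathcal{R}_{ap}$.
   Context: Setting. Let $M\subset\mathbb{R}^d$ be closed; all topological notions are relative to $M$. Let $F:M\to M$ be continuous with $\|F\|:=\sup_{x\in M}\|F(x)\|<\infty$. For $A\subset M$ and $\delta>0$, put $N^\delta(A)=\{x\in M:\inf_{y\in A}\|x-y\|<\delta\}$, and let $d(x,y)=\max_i|x_i-y_i|$. Let $\{X^\varepsilon\}_{\varepsilon>0}$ be a family of time-homogeneous Markov chains on $M$ with transition kernels $p^\varepsilon(x,\Gamma)$. The following standing hypotheses are assumed. (SH1) For every $\delta>0$, $\beta_\delta(\varepsilon):=\sup_{x\in M}p^\varepsilon(x,M\setminus N^\delta(F(x)))\to0$ as $\varepsilon\to0$. (SH2) $M=M_0\cup M_1$ (disjoint), where $M_0$ is closed, $F(M_0)\subseteq M_0$, $F(M_1)\subseteq M_1$, and $p^\varepsilon(x,M_1)=0$ for all $\varepsilon>0$ and $x\in M_0$. QSD. A Borel probability measure $\mu_\varepsilon$ on $M_1$ is a quasi-stationary distribution (QSD) for $p^\varepsilon$ if there is $\lambda_\varepsilon\in(0,1)$ with $\int_{M_1}p^\varepsilon(x,\Gamma)\,\mu_\varepsilon(dx)=\lambda_\varepsilon\mu_\varepsilon(\Gamma)$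 for all Borel $\Gamma\subset M_1$. A measure $\mu$ is $F$-invariant if $\mu(F^{-1}\Gamma)=\mu(\Gamma)$ for all Borel $\Gamma$. ap-chain recurrence. For $\delta>0$, an ap $\delta$-pseudoorbit joining $x$ to $y$ is a tuple $(\xi_0,\dots,\xi_n)\in M^{n+1}$, $n\ge1$, with: - $\xi_0=x$ and $\xi_n=y$; - $\xi_i\in M_0\Rightarrow\xi_{i+1}\in M_0$; - $d(\xi_{i+1},F(\xi_i))<\delta$ for all $i$. A point $x$ is ap-chain recurrent if for every $\delta>0$ there is an ap $\delta$-pseudoorbit joining $x$ to itself. $\mathcal{R}_{ap}$ denotes the set of ap-chain recurrent points. *)

theory Defs
  imports "HOL-Probability.Probability"
begin

definition borelM :: "(real^'d) set \<Rightarrow> (real^'d) measure" where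
  "borelM M = restrict_space borel M"

definition nbhd :: "(real^'d) set \<Rightarrow> real \<Rightarrow> (real^'d) set \<Rightarrow> (real^'d) set" where
  "nbhd M \<delta> A = {x \<in> M. \<exists>y\<in>A. norm (x - y) < \<delta>}"

definition dmax :: "real^'d \<Rightarrow> real^'d \<Rightarrow> real" where
  "dmax x y = Max (range (\<lambda>i. \<bar>x $ i - y $ i\<bar>))"

definition ap_pseudoorbit ::
  "(real^'d) set \<Rightarrow> (real^'d) set \<Rightarrow> (real^'d \<Rightarrow> real^'d) \<Rightarrow> real
     \<Rightarrow> real^'d \<Rightarrow> real^'d \<Rightarrow> nat \<Rightarrow> (nat \<Rightarrow> real^'d) \<Rightarrow> bool" where
  "ap_pseudoorbit M M0 F \<delta> x y n \<xi> \<longleftrightarrow>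
     n \<ge> 1 \<and> (\<forall>i\<le>n. \<xi> i \<in> M) \<and> \<xi> 0 = x \<and> \<xi> n = y \<and>
     (\<forall>i<n. \<xi> i \<in> M0 \<longrightarrow> \<xi> (Suc i) \<in> M0) \<and>
     (\<forall>i<n. dmax (\<xi> (Suc i)) (F (\<xi> i)) < \<delta>)"

definition R_ap :: "(real^'d) set \<Rightarrow> (real^'d) set \<Rightarrow> (real^'d \<Rightarrow> real^'d) \<Rightarrow> (real^'d) set" where
  "R_ap M M0 F = {x \<in> M. \<forall>\<delta>>0. \<exists>n \<xi>. ap_pseudoorbit M M0 F \<delta> x x n \<xi>}"

text \<open>mu is a QSD (on M1, as a Borel probability measure on M giving full mass to M1)
  for the kernel K with eigenvalue lam; the kernel value p(x,Gamma) is measure (K x) Gamma.\<close>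
definition is_qsd :: "(real^'d) set \<Rightarrow> (real^'d) set \<Rightarrow> (real^'d \<Rightarrow> (real^'d) measure)
     \<Rightarrow> (real^'d) measure \<Rightarrow> real \<Rightarrow> bool" where
  "is_qsd M M1 K \<mu> lam \<longleftrightarrow>
     prob_space \<mu> \<and> sets \<mu> = sets (borelM M) \<and> measure \<mu> M1 = 1 \<and>
     0 < lam \<and> lam < 1 \<and>
     (\<forall>\<Gamma>\<in>sets (borelM M). \<Gamma> \<subseteq> M1 \<longrightarrow>
        set_lebesgue_integral \<mu> M1 (\<lambda>x. measure (K x) \<Gamma>) = lam * measure \<mu> \<Gamma>)"

definition weak_conv_on :: "(real^'d) set \<Rightarrow> (nat \<Rightarrow> (real^'d) measure) \<Rightarrow> (real^'d) measure \<Rightarrow> bool" where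
  "weak_conv_on M \<mu>s \<mu> \<longleftrightarrow>
     (\<forall>f :: real^'d \<Rightarrow> real. continuous_on M f \<and> bounded (f ` M) \<longrightarrow>
        (\<lambda>n. integral\<^sup>L (\<mu>s n) f) \<longlonglongrightarrow> integral\<^sup>L \<mu> f)"

end

theory Submission
  imports Defs
begin

(* Let mu_n be a QSD of the kernel P = K (eps n) with eigenvalue lam_n.
   Integrating the eigen-equation over M1 (which carries all of mu_n) shows that
   lam_n * mu_n is dominated by the one-step image mu_n P; for a test function 0 <= h <= 1,
   applied to h and to 1 - h, this gives |mu_n(P h) - mu_n(h)| <= 1 - lam_n.  By SH1,
   P h is uniformly close to h o F when h is Lipschitz, so |mu_n(h o F) - mu_n(h)| -> 0,
   and weak convergence yields mu(h o F) = mu(h).  Lipschitz approximations of indicators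
   give mu(F^-1 C) = mu(C) for closed C, and the closed sets are an intersection-stable
   generator of the Borel sets.

   Poincare recurrence, proved here for any finite measure-preserving map, shows
   that almost every point returns to every member of a countable basis containing it.  A
   point that returns arbitrarily close to itself is ap-chain recurrent: its orbit segment,
   closed up by a final small jump back to the point, is an ap pseudo-orbit (the final jump
   cannot leave M0, because M0 and M1 are both forward invariant). *)

lemma space_borelM [simp]: "space (borelM M) = M"
  by (simp add: borelM_def space_restrict_space)

lemma borelM_Int: "X \<in> sets borel \<Longrightarrow> M \<inter> X \<in> sets (borelM M)"
  unfolding borelM_def sets_restrict_space by blast

lemma continuous_on_borelM_measurable:
  assumes "sets N = sets (borelM M)" and "continuous_on M f"
  shows "f \<in> borel_measurable N"
  using borel_measurable_continuous_on_restrict[OF assms(2)] measurable_cong_sets[OF assms(1) refl]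
  unfolding borelM_def by blast

lemma dmax_le_norm: "dmax x y \<le> norm (x - y)"
  unfolding dmax_def
  by (subst Max_le_iff) (auto simp: component_le_norm_cart simp flip: vector_minus_component)

lemma kernel_prob_space:
  assumes "K \<in> B \<rightarrow>\<^sub>M prob_algebra B" and "x \<in> space B"
  shows "prob_space (K x)" and "sets (K x) = sets B" and "space (K x) = space B"
proof -
  have "prob_space (K x) \<and> sets (K x) = sets B"
    using measurable_space[OF assms] by (simp add: space_prob_algebra)
  then show "prob_space (K x)" "sets (K x) = sets B" "space (K x) = space B"
    using sets_eq_imp_space_eq by auto
qed

lemma unit_test_integral:
  fixes h :: "'a \<Rightarrow> real"
  assumes "prob_space N" and h: "h \<in> borel_measurable N"
    and h01: "\<And>x. x \<in> space N \<Longrightarrow> h x \<in> {0..1}"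
  shows "integrable N h" and "(\<integral>\<^sup>+x. ennreal (h x) \<partial>N) = ennreal (integral\<^sup>L N h)"
    and "integral\<^sup>L N h \<in> {0..1}"
proof -
  interpret prob_space N by fact
  show int: "integrable N h"
    using h h01 by (intro integrable_const_bound[where B=1]) auto
  show "(\<integral>\<^sup>+x. ennreal (h x) \<partial>N) = ennreal (integral\<^sup>L N h)"
    using int h01 by (intro nn_integral_eq_integral) auto
  have "integral\<^sup>L N h \<le> integral\<^sup>L N (\<lambda>_. 1)" using int h01 by (intro integral_mono) auto
  moreover have "0 \<le> integral\<^sup>L N h" using h01 by (intro Bochner_Integration.integral_nonneg) auto
  ultimately show "integral\<^sup>L N h \<in> {0..1}" by (simp add: prob_space)
qed

lemma integral_one_minus:
  fixes h :: "'a \<Rightarrow> real"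
  assumes "prob_space N" and "integrable N h"
  shows "integral\<^sup>L N (\<lambda>x. 1 - h x) = 1 - integral\<^sup>L N h"
proof -
  interpret prob_space N by fact
  show ?thesis using assms(2) by (simp add: prob_space)
qed

lemma kernel_integral_measurable:
  fixes h :: "'a \<Rightarrow> real"
  assumes K: "K \<in> B \<rightarrow>\<^sub>M prob_algebra B" and h: "h \<in> borel_measurable B"
  shows "(\<lambda>x. integral\<^sup>L (K x) h) \<in> borel_measurable B"
  using measurable_compose[OF measurable_prob_algebraD[OF K] integral_measurable_subprob_algebra[OF h]] .

lemma kernel_unit_test_integral:
  fixes h :: "'a \<Rightarrow> real"
  assumes K: "K \<in> B \<rightarrow>\<^sub>M prob_algebra B" and h: "h \<in> borel_measurable B"
    and h01: "\<And>x. x \<in> space B \<Longrightarrow> h x \<in> {0..1}" and x: "x \<in> space B"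
  shows "integrable (K x) h"
    and "(\<integral>\<^sup>+y. ennreal (h y) \<partial>K x) = ennreal (integral\<^sup>L (K x) h)"
    and "integral\<^sup>L (K x) h \<in> {0..1}"
proof -
  have hK: "h \<in> borel_measurable (K x)"
    using h measurable_cong_sets[OF kernel_prob_space(2)[OF K x] refl] by blast
  have h01K: "h y \<in> {0..1}" if "y \<in> space (K x)" for y
    using that unfolding kernel_prob_space(3)[OF K x] by (rule h01)
  note unit = unit_test_integral[OF kernel_prob_space(1)[OF K x] hK h01K]
  show "integrable (K x) h" by (rule unit(1))
  show "(\<integral>\<^sup>+y. ennreal (h y) \<partial>K x) = ennreal (integral\<^sup>L (K x) h)" by (rule unit(2))
  show "integral\<^sup>L (K x) h \<in> {0..1}" by (rule unit(3))
qed

lemma le_measure_setwise: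
  assumes "sets N = sets N'" and "\<And>A. A \<in> sets N \<Longrightarrow> emeasure N A \<le> emeasure N' A"
  shows "N \<le> N'"
proof -
  have "emeasure N A \<le> emeasure N' A" for A
    using assms by (cases "A \<in> sets N") (auto simp: emeasure_notin_sets)
  then show ?thesis
    using assms(1) sets_eq_imp_space_eq[OF assms(1)] by (auto simp: le_measure_iff le_fun_def)
qed

locale kernel_qsd =
  fixes B :: "'a measure" and K :: "'a \<Rightarrow> 'a measure" and M1 :: "'a set"
    and \<mu> :: "'a measure" and lam :: real
  assumes prob: "prob_space \<mu>" and sets_eq: "sets \<mu> = sets B"
    and kernel: "K \<in> B \<rightarrow>\<^sub>M prob_algebra B" and M1_sets: "M1 \<in> sets B"
    and full: "measure \<mu> M1 = 1" and lam: "0 \<le> lam" "lam \<le> 1"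
    and eigen: "\<And>\<Gamma>. \<Gamma> \<in> sets B \<Longrightarrow> \<Gamma> \<subseteq> M1 \<Longrightarrow>
        set_lebesgue_integral \<mu> M1 (\<lambda>x. measure (K x) \<Gamma>) = lam * measure \<mu> \<Gamma>"
begin

lemma space_eq: "space \<mu> = space B"
  using sets_eq by (rule sets_eq_imp_space_eq)

lemma in_prob_algebra: "\<mu> \<in> space (prob_algebra B)"
  using sets_eq prob by (simp add: space_prob_algebra)

lemma measurable_\<mu>: "f \<in> B \<rightarrow>\<^sub>M N \<Longrightarrow> f \<in> \<mu> \<rightarrow>\<^sub>M N"
  by (simp add: measurable_cong_sets[OF sets_eq refl])

text \<open>lam * mu is dominated by the one-step image of mu: for every G,
  lam * mu(G) = lam * mu(G \<inter> M1) is the integral of K x (G \<inter> M1) over M1, which is at most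
  the integral of K x G.\<close>

lemma scaled_le_bind: "scale_measure (ennreal lam) \<mu> \<le> \<mu> \<bind> K"
proof (rule le_measure_setwise)
  interpret prob_space \<mu> by (rule prob)
  show "sets (scale_measure (ennreal lam) \<mu>) = sets (\<mu> \<bind> K)"
    using sets_bind'[OF in_prob_algebra kernel] sets_eq by simp
  fix G assume "G \<in> sets (scale_measure (ennreal lam) \<mu>)"
  then have G: "G \<in> sets B" using sets_eq by simp
  have GM1: "G \<inter> M1 \<in> sets B" using G M1_sets by blast
  define g where "g x = indicator M1 x * measure (K x) (G \<inter> M1)" for x
  have g_meas: "g \<in> borel_measurable \<mu>"
    using measurable_compose[OF measurable_prob_algebraD[OF kernel] measurable_measure_subprob_algebra[OF GM1]]
      M1_sets sets_eq unfolding g_def by (simp add: measurable_\<mu>)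
  have g01: "g x \<in> {0..1}" if "x \<in> space \<mu>" for x
    using prob_space.prob_le_1[OF kernel_prob_space(1)[OF kernel]] that space_eq
    by (auto simp: g_def indicator_def)
  have g_le: "ennreal (g x) \<le> emeasure (K x) G" if "x \<in> space \<mu>" for x
  proof -
    interpret Kx: prob_space "K x" using kernel_prob_space(1)[OF kernel] that space_eq by simp
    have "ennreal (g x) \<le> emeasure (K x) (G \<inter> M1)"
      using kernel_prob_space(2)[OF kernel] that space_eq GM1
      by (auto simp: g_def indicator_def Kx.emeasure_eq_measure)
    also have "\<dots> \<le> emeasure (K x) G"
      using kernel_prob_space(2)[OF kernel] that space_eq G by (intro emeasure_mono) auto
    finally show ?thesis .
  qed
  have "AE x in \<mu>. x \<in> M1" using full by (intro AE_prob_1) simp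
  then have "measure \<mu> (G \<inter> M1) = measure \<mu> G" using G GM1 sets_eq by (intro measure_eq_AE) auto
  then have "emeasure (scale_measure (ennreal lam) \<mu>) G = ennreal (lam * measure \<mu> (G \<inter> M1))"
    using lam by (simp add: emeasure_eq_measure ennreal_mult)
  also have "\<dots> = ennreal (integral\<^sup>L \<mu> g)"
    using eigen[OF GM1] unfolding g_def set_lebesgue_integral_def by simp
  also have "\<dots> = (\<integral>\<^sup>+x. ennreal (g x) \<partial>\<mu>)"
    using unit_test_integral(2)[OF prob g_meas g01] by simp
  also have "\<dots> \<le> (\<integral>\<^sup>+x. emeasure (K x) G \<partial>\<mu>)" using g_le by (intro nn_integral_mono)
  also have "\<dots> = emeasure (\<mu> \<bind> K) G" using emeasure_bind_prob_algebra[OF in_prob_algebra kernel G] by simp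
  finally show "emeasure (scale_measure (ennreal lam) \<mu>) G \<le> emeasure (\<mu> \<bind> K) G" .
qed

lemma lower_bound:
  fixes h :: "'a \<Rightarrow> real"
  assumes h: "h \<in> borel_measurable B" and h01: "\<And>x. x \<in> space B \<Longrightarrow> h x \<in> {0..1}"
  shows "lam * integral\<^sup>L \<mu> h \<le> integral\<^sup>L \<mu> (\<lambda>x. integral\<^sup>L (K x) h)"
proof -
  note Kh = kernel_unit_test_integral[OF kernel h h01]
  have h01\<mu>: "h x \<in> {0..1}" and Kh01: "integral\<^sup>L (K x) h \<in> {0..1}" if "x \<in> space \<mu>" for x
    using h01 Kh(3) that space_eq by simp_all
  note unit_h = unit_test_integral[OF prob measurable_\<mu>[OF h] h01\<mu>]
    and unit_Kh = unit_test_integral[OF prob measurable_\<mu>[OF kernel_integral_measurable[OF kernel h]] Kh01]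
  have "ennreal lam * ennreal (integral\<^sup>L \<mu> h) = (\<integral>\<^sup>+x. ennreal (h x) \<partial>scale_measure (ennreal lam) \<mu>)"
    using unit_h(2) measurable_\<mu>[OF h] by (simp add: nn_integral_scale_measure)
  also have "\<dots> \<le> (\<integral>\<^sup>+x. ennreal (h x) \<partial>(\<mu> \<bind> K))"
    using scaled_le_bind sets_bind'[OF in_prob_algebra kernel] sets_eq
    by (intro nn_integral_mono_measure) auto
  also have "\<dots> = (\<integral>\<^sup>+x. \<integral>\<^sup>+y. ennreal (h y) \<partial>K x \<partial>\<mu>)"
    using h measurable_\<mu>[OF measurable_prob_algebraD[OF kernel]] by (intro nn_integral_bind[where B=B]) auto
  also have "\<dots> = (\<integral>\<^sup>+x. ennreal (integral\<^sup>L (K x) h) \<partial>\<mu>)"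
    using Kh(2) space_eq by (intro nn_integral_cong) auto
  also have "\<dots> = ennreal (integral\<^sup>L \<mu> (\<lambda>x. integral\<^sup>L (K x) h))"
    using unit_Kh(2) by simp
  finally have "ennreal (lam * integral\<^sup>L \<mu> h) \<le> ennreal (integral\<^sup>L \<mu> (\<lambda>x. integral\<^sup>L (K x) h))"
    using unit_h(3) lam by (simp add: ennreal_mult)
  then show ?thesis using unit_Kh(3) by simp
qed

text \<open>A QSD with eigenvalue close to 1 is almost stationary: applying the lower bound to h
  and to 1 - h shows that mu(K h) and mu(h) differ by at most 1 - lam.\<close>

lemma almost_stationary:
  fixes h :: "'a \<Rightarrow> real"
  assumes h: "h \<in> borel_measurable B" and h01: "\<And>x. x \<in> space B \<Longrightarrow> h x \<in> {0..1}"
  shows "\<bar>integral\<^sup>L \<mu> (\<lambda>x. integral\<^sup>L (K x) h) - integral\<^sup>L \<mu> h\<bar> \<le> 1 - lam"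
proof -
  note Kh = kernel_unit_test_integral[OF kernel h h01]
  define a where "a = integral\<^sup>L \<mu> h"
  define c where "c = integral\<^sup>L \<mu> (\<lambda>x. integral\<^sup>L (K x) h)"
  have h01\<mu>: "h x \<in> {0..1}" and Kh01: "integral\<^sup>L (K x) h \<in> {0..1}" if "x \<in> space \<mu>" for x
    using h01 Kh(3) that space_eq by simp_all
  note unit_h = unit_test_integral[OF prob measurable_\<mu>[OF h] h01\<mu>]
    and unit_Kh = unit_test_integral[OF prob measurable_\<mu>[OF kernel_integral_measurable[OF kernel h]] Kh01]
  have "integral\<^sup>L \<mu> (\<lambda>x. integral\<^sup>L (K x) (\<lambda>y. 1 - h y)) = integral\<^sup>L \<mu> (\<lambda>x. 1 - integral\<^sup>L (K x) h)"
    using integral_one_minus[OF kernel_prob_space(1)[OF kernel] Kh(1)] space_eq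
    by (intro Bochner_Integration.integral_cong) auto
  moreover have "lam * integral\<^sup>L \<mu> (\<lambda>x. 1 - h x) \<le> integral\<^sup>L \<mu> (\<lambda>x. integral\<^sup>L (K x) (\<lambda>y. 1 - h y))"
    using h h01 by (intro lower_bound) auto
  ultimately have "lam * (1 - a) \<le> 1 - c"
    unfolding a_def c_def by (simp add: integral_one_minus[OF prob] unit_h(1) unit_Kh(1))
  moreover have "lam * a \<le> c" unfolding a_def c_def by (rule lower_bound[OF h h01])
  moreover have "(1 - lam) * a \<le> 1 - lam" "(1 - lam) * (1 - a) \<le> 1 - lam"
    using unit_h(3) lam unfolding a_def by (simp_all add: mult_left_le)
  ultimately have "\<bar>c - a\<bar> \<le> 1 - lam" by (simp add: abs_le_iff algebra_simps)
  then show ?thesis unfolding a_def c_def .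
qed

end

definition lipschitz_test :: "real \<Rightarrow> (real^'d \<Rightarrow> real) \<Rightarrow> bool" where
  "lipschitz_test L f \<longleftrightarrow> L-lipschitz_on UNIV f \<and> (\<forall>x. f x \<in> {0..1})"

lemma lipschitz_test_continuous: "lipschitz_test L f \<Longrightarrow> continuous_on A f"
  unfolding lipschitz_test_def by (meson continuous_on_subset lipschitz_on_continuous_on subset_UNIV)

lemma lipschitz_test_measurable:
  "sets N = sets (borelM M) \<Longrightarrow> lipschitz_test L f \<Longrightarrow> f \<in> borel_measurable N"
  by (intro continuous_on_borelM_measurable lipschitz_test_continuous)

lemma integral_near_point:
  fixes P :: "(real^'d) measure"
  assumes "prob_space P" and S: "sets P = sets (borelM M)" and \<delta>: "\<delta> > 0"
    and f: "lipschitz_test L f"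
  shows "\<bar>integral\<^sup>L P f - f y\<bar> \<le> L * \<delta> + measure P (M - nbhd M \<delta> {y})"
proof -
  interpret prob_space P by fact
  have sp: "space P = M" using sets_eq_imp_space_eq[OF S] by simp
  have L: "L \<ge> 0" and f01: "\<And>x. f x \<in> {0..1}"
    using f lipschitz_on_nonneg unfolding lipschitz_test_def by auto
  define D where "D = M - nbhd M \<delta> {y}"
  have D: "D = M \<inter> - ball y \<delta>" by (auto simp: D_def nbhd_def dist_norm norm_minus_commute)
  have D_sets: "D \<in> sets P" unfolding D using borelM_Int[of "- ball y \<delta>" M] S by simp
  have f_int: "integrable P f"
    using unit_test_integral(1)[OF prob_space_axioms lipschitz_test_measurable[OF S f]] f01 by simp
  have bound: "\<bar>f z - f y\<bar> \<le> L * \<delta> + indicator D z" if "z \<in> space P" for z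
  proof (cases "z \<in> D")
    case True
    have "0 \<le> L * \<delta>" using L \<delta> by simp
    then show ?thesis using True f01[of z] f01[of y] by (simp add: abs_le_iff)
  next
    case False
    then have "dist z y < \<delta>" using that sp unfolding D by (auto simp: dist_commute)
    have "dist (f z) (f y) \<le> L * dist z y"
      using f unfolding lipschitz_test_def by (auto intro: lipschitz_onD)
    also have "\<dots> \<le> L * \<delta>" using \<open>dist z y < \<delta>\<close> L by (intro mult_left_mono) auto
    finally show ?thesis using False by (simp add: dist_real_def)
  qed
  have "\<bar>integral\<^sup>L P f - f y\<bar> = \<bar>integral\<^sup>L P (\<lambda>z. f z - f y)\<bar>"
    using f_int by (simp add: prob_space)
  also have "\<dots> \<le> integral\<^sup>L P (\<lambda>z. L * \<delta> + indicator D z)"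
    using f_int D_sets bound
    by (intro integral_abs_bound_integral Bochner_Integration.integrable_add integrable_real_indicator)
       (auto simp: emeasure_eq_measure)
  also have "\<dots> = L * \<delta> + measure P D"
    using D_sets by (subst Bochner_Integration.integral_add) (auto simp: prob_space emeasure_eq_measure)
  finally show ?thesis unfolding D_def .
qed

lemma is_qsd_kernel_qsd:
  assumes "is_qsd M M1 P \<mu> lam" and "P \<in> borelM M \<rightarrow>\<^sub>M prob_algebra (borelM M)"
    and "M1 \<in> sets (borelM M)"
  shows "kernel_qsd (borelM M) P M1 \<mu> lam"
  using assms unfolding is_qsd_def kernel_qsd_def by auto

lemma qsd_invariance_defect:
  fixes \<mu> :: "(real^'d) measure"
  assumes qsd: "is_qsd M M1 P \<mu> lam" and P: "P \<in> borelM M \<rightarrow>\<^sub>M prob_algebra (borelM M)"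
    and M1: "M1 \<in> sets (borelM M)" and F_cont: "continuous_on M F"
    and \<delta>: "\<delta> > 0" and f: "lipschitz_test L f"
    and escape: "\<And>x. x \<in> M \<Longrightarrow> measure (P x) (M - nbhd M \<delta> {F x}) \<le> s"
  shows "\<bar>integral\<^sup>L \<mu> f - integral\<^sup>L \<mu> (\<lambda>x. f (F x))\<bar> \<le> (1 - lam) + (L * \<delta> + s)"
proof -
  interpret kernel_qsd "borelM M" P M1 \<mu> lam by (rule is_qsd_kernel_qsd[OF qsd P M1])
  interpret prob_space \<mu> by (rule prob)
  have sp: "space \<mu> = M" using space_eq by simp
  have f01: "f x \<in> {0..1}" for x using f unfolding lipschitz_test_def by auto
  have fB: "f \<in> borel_measurable (borelM M)" by (rule lipschitz_test_measurable[OF refl f])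
  have fF: "(\<lambda>x. f (F x)) \<in> borel_measurable \<mu>"
    by (rule continuous_on_borelM_measurable[OF sets_eq])
       (rule continuous_on_compose2[OF lipschitz_test_continuous[OF f] F_cont subset_UNIV])
  define g where "g x = integral\<^sup>L (P x) f" for x
  have g: "g \<in> borel_measurable \<mu>"
    unfolding g_def by (rule measurable_\<mu>[OF kernel_integral_measurable[OF P fB]])
  have g01: "g x \<in> {0..1}" if "x \<in> space \<mu>" for x
    using kernel_unit_test_integral(3)[OF P fB, of x] f01 that sp by (simp add: g_def)
  have g_int: "integrable \<mu> g" by (rule unit_test_integral(1)[OF prob g g01])
  have fF_int: "integrable \<mu> (\<lambda>x. f (F x))" using unit_test_integral(1)[OF prob fF] f01 by simp
  have stationary: "\<bar>integral\<^sup>L \<mu> g - integral\<^sup>L \<mu> f\<bar> \<le> 1 - lam"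
    unfolding g_def using f01 by (intro almost_stationary[OF fB]) auto
  have "\<bar>integral\<^sup>L \<mu> g - integral\<^sup>L \<mu> (\<lambda>x. f (F x))\<bar> = \<bar>integral\<^sup>L \<mu> (\<lambda>x. g x - f (F x))\<bar>"
    using g_int fF_int by simp
  also have "\<dots> \<le> integral\<^sup>L \<mu> (\<lambda>x. L * \<delta> + s)"
  proof (intro integral_abs_bound_integral g_int fF_int Bochner_Integration.integrable_diff integrable_const)
    fix x assume "x \<in> space \<mu>"
    then have x: "x \<in> M" using sp by simp
    have "\<bar>g x - f (F x)\<bar> \<le> L * \<delta> + measure (P x) (M - nbhd M \<delta> {F x})"
      unfolding g_def using kernel_prob_space[OF P, of x] x \<delta> f by (intro integral_near_point) auto
    then show "\<bar>g x - f (F x)\<bar> \<le> L * \<delta> + s" using escape[OF x] by simp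
  qed
  also have "\<dots> = L * \<delta> + s" by (simp add: prob_space)
  finally show ?thesis using stationary by linarith
qed

lemma kernel_measure_le_SUP:
  assumes K: "K \<in> B \<rightarrow>\<^sub>M prob_algebra B" and x: "x \<in> space B"
  shows "measure (K x) (A x) \<le> (SUP y\<in>space B. measure (K y) (A y))"
proof (rule cSUP_upper[OF x], rule bdd_aboveI[where M=1], safe)
  fix y assume "y \<in> space B"
  then show "measure (K y) (A y) \<le> 1"
    using kernel_prob_space(1)[OF K] by (simp add: prob_space.prob_le_1)
qed

lemma nonpos_if_le_all_multiples:
  fixes t L :: real
  assumes L: "L \<ge> 0" and le: "\<And>\<delta>. \<delta> > 0 \<Longrightarrow> t \<le> L * \<delta>"
  shows "t \<le> 0"
proof (rule field_le_epsilon)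
  fix e :: real assume e: "e > 0"
  have "L * (e / (L + 1)) \<le> e" using L e by (simp add: field_simps)
  then show "t \<le> 0 + e" using le[of "e / (L + 1)"] L e by simp
qed

lemma weak_conv_on_unit_test:
  fixes g :: "real^'d \<Rightarrow> real"
  assumes "weak_conv_on M \<mu>s \<mu>" and "continuous_on M g" and "\<And>x. g x \<in> {0..1}"
  shows "(\<lambda>n. integral\<^sup>L (\<mu>s n) g) \<longlonglongrightarrow> integral\<^sup>L \<mu> g"
proof -
  have "bounded (g ` M)"
    using assms(3) by (intro bounded_subset[OF bounded_closed_interval[of 0 1]]) auto
  then show ?thesis using assms(1,2) unfolding weak_conv_on_def by blast
qed

text \<open>Limits of QSDs along eps n \<rightarrow> 0 with eigenvalues tending to 1 integrate every
  Lipschitz test function invariantly: by SH1 the escape bound s tends to 0, and the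
  remaining defect L * delta is arbitrarily small.\<close>

lemma qsd_limit_integral_invariant:
  fixes M M1 :: "(real^'d) set" and F :: "real^'d \<Rightarrow> real^'d"
    and K :: "real \<Rightarrow> real^'d \<Rightarrow> (real^'d) measure" and \<epsilon> :: "nat \<Rightarrow> real"
    and \<mu>s :: "nat \<Rightarrow> (real^'d) measure" and lam :: "nat \<Rightarrow> real" and \<mu> :: "(real^'d) measure"
  assumes F_cont: "continuous_on M F"
    and kernel: "\<And>e. e > 0 \<Longrightarrow> K e \<in> borelM M \<rightarrow>\<^sub>M prob_algebra (borelM M)"
    and SH1: "\<And>\<delta>. \<delta> > 0 \<Longrightarrow>
      ((\<lambda>e. SUP x\<in>M. measure (K e x) (M - nbhd M \<delta> {F x})) \<longlongrightarrow> 0) (at_right 0)"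
    and M1: "M1 \<in> sets (borelM M)"
    and eps_pos: "\<And>n. \<epsilon> n > 0" and eps_lim: "\<epsilon> \<longlonglongrightarrow> 0"
    and qsd: "\<And>n. is_qsd M M1 (K (\<epsilon> n)) (\<mu>s n) (lam n)"
    and weak: "weak_conv_on M \<mu>s \<mu>" and lam_lim: "lam \<longlonglongrightarrow> 1"
    and f: "lipschitz_test L f"
  shows "integral\<^sup>L \<mu> (\<lambda>x. f (F x)) = integral\<^sup>L \<mu> f"
proof -
  have L: "L \<ge> 0" using f lipschitz_on_nonneg unfolding lipschitz_test_def by auto
  have f01: "f x \<in> {0..1}" for x using f unfolding lipschitz_test_def by auto
  note weak_lim = weak_conv_on_unit_test[OF weak]
  have lim_f: "(\<lambda>n. integral\<^sup>L (\<mu>s n) f) \<longlonglongrightarrow> integral\<^sup>L \<mu> f"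
    by (rule weak_lim[OF lipschitz_test_continuous[OF f] f01])
  have lim_fF: "(\<lambda>n. integral\<^sup>L (\<mu>s n) (\<lambda>x. f (F x))) \<longlonglongrightarrow> integral\<^sup>L \<mu> (\<lambda>x. f (F x))"
    by (rule weak_lim[OF continuous_on_compose2[OF lipschitz_test_continuous[OF f] F_cont subset_UNIV] f01])
  have defect: "\<bar>integral\<^sup>L \<mu> f - integral\<^sup>L \<mu> (\<lambda>x. f (F x))\<bar> \<le> L * \<delta>" if \<delta>: "\<delta> > 0" for \<delta>
  proof -
    define s where "s e = (SUP x\<in>M. measure (K e x) (M - nbhd M \<delta> {F x}))" for e
    have "filterlim \<epsilon> (at_right 0) sequentially"
      using eps_lim eps_pos by (intro tendsto_imp_filterlim_at_right) auto
    then have s_lim: "(\<lambda>n. s (\<epsilon> n)) \<longlonglongrightarrow> 0"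
      using filterlim_compose[OF SH1[OF \<delta>]] unfolding s_def by blast
    have escape: "measure (K (\<epsilon> n) x) (M - nbhd M \<delta> {F x}) \<le> s (\<epsilon> n)" if "x \<in> M" for n x
      using kernel_measure_le_SUP[OF kernel[OF eps_pos], of x] that by (simp add: s_def)
    have "\<bar>integral\<^sup>L (\<mu>s n) f - integral\<^sup>L (\<mu>s n) (\<lambda>x. f (F x))\<bar> \<le> (1 - lam n) + (L * \<delta> + s (\<epsilon> n))" for n
      using escape by (intro qsd_invariance_defect[OF qsd kernel[OF eps_pos] M1 F_cont \<delta> f])
    moreover have "(\<lambda>n. \<bar>integral\<^sup>L (\<mu>s n) f - integral\<^sup>L (\<mu>s n) (\<lambda>x. f (F x))\<bar>)
        \<longlonglongrightarrow> \<bar>integral\<^sup>L \<mu> f - integral\<^sup>L \<mu> (\<lambda>x. f (F x))\<bar>"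
      by (intro tendsto_intros lim_f lim_fF)
    moreover have "(\<lambda>n. (1 - lam n) + (L * \<delta> + s (\<epsilon> n))) \<longlonglongrightarrow> (1 - 1) + (L * \<delta> + 0)"
      by (intro tendsto_intros lam_lim s_lim)
    ultimately show ?thesis by (simp add: LIMSEQ_le)
  qed
  have "\<bar>integral\<^sup>L \<mu> f - integral\<^sup>L \<mu> (\<lambda>x. f (F x))\<bar> \<le> 0"
    using L defect by (rule nonpos_if_le_all_multiples)
  then show ?thesis by simp
qed

definition closed_cutoff :: "'a::metric_space set \<Rightarrow> nat \<Rightarrow> 'a \<Rightarrow> real" where
  "closed_cutoff C k x = max 0 (1 - real (Suc k) * infdist x C)"

lemma closed_cutoff_lipschitz_test:
  fixes C :: "(real^'d) set"
  shows "lipschitz_test (real (Suc k)) (closed_cutoff C k)"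
  unfolding lipschitz_test_def
proof (intro conjI allI lipschitz_onI)
  fix a b :: "real^'d"
  have "\<bar>closed_cutoff C k a - closed_cutoff C k b\<bar> \<le> \<bar>real (Suc k) * infdist a C - real (Suc k) * infdist b C\<bar>"
    unfolding closed_cutoff_def by (auto simp: max_def)
  also have "\<dots> = real (Suc k) * \<bar>infdist a C - infdist b C\<bar>"
    by (simp add: abs_mult flip: right_diff_distrib)
  also have "\<dots> \<le> real (Suc k) * dist a b"
    by (intro mult_left_mono infdist_triangle_abs) auto
  finally show "dist (closed_cutoff C k a) (closed_cutoff C k b) \<le> real (Suc k) * dist a b"
    by (simp add: dist_real_def)
  show "closed_cutoff C k a \<in> {0..1}"
    unfolding closed_cutoff_def using infdist_nonneg[of a C] by auto
qed simp

lemma closed_cutoff_tendsto_indicator: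
  assumes "closed C" "C \<noteq> {}"
  shows "(\<lambda>k. closed_cutoff C k x) \<longlonglongrightarrow> indicator C x"
proof (cases "x \<in> C")
  case True
  then show ?thesis by (simp add: closed_cutoff_def)
next
  case False
  then have d: "infdist x C > 0" using infdist_pos_not_in_closed[OF assms] by simp
  obtain k0 :: nat where "1 < real k0 * infdist x C" using ex_less_of_nat_mult[OF d] by blast
  then have "closed_cutoff C k x = 0" if "k \<ge> k0" for k
    using that d unfolding closed_cutoff_def
    by (smt (verit, ccfv_SIG) mult_right_mono of_nat_Suc of_nat_mono)
  then have "eventually (\<lambda>k. closed_cutoff C k x = 0) sequentially"
    unfolding eventually_sequentially by blast
  then show ?thesis using False by (simp add: tendsto_eventually)
qed

lemma integral_closed_cutoff_tendsto:
  assumes "prob_space \<mu>" and C: "closed C" "C \<noteq> {}" and \<phi>: "\<phi> \<in> borel_measurable \<mu>"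
  shows "(\<lambda>k. integral\<^sup>L \<mu> (\<lambda>x. closed_cutoff C k (\<phi> x))) \<longlonglongrightarrow> measure \<mu> (\<phi> -` C \<inter> space \<mu>)"
proof -
  interpret prob_space \<mu> by fact
  have cont: "continuous_on UNIV (closed_cutoff C k)" for k
    unfolding closed_cutoff_def by (intro continuous_intros)
  have "(\<lambda>k. integral\<^sup>L \<mu> (\<lambda>x. closed_cutoff C k (\<phi> x))) \<longlonglongrightarrow> integral\<^sup>L \<mu> (\<lambda>x. indicator C (\<phi> x))"
  proof (rule integral_dominated_convergence[where w="\<lambda>_. 1"])
    show "(\<lambda>x. indicator C (\<phi> x) :: real) \<in> borel_measurable \<mu>"
      using measurable_compose[OF \<phi> borel_measurable_indicator[OF borel_closed[OF C(1)]]] .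
    show "(\<lambda>x. closed_cutoff C k (\<phi> x)) \<in> borel_measurable \<mu>" for k
      using measurable_compose[OF \<phi> borel_measurable_continuous_onI[OF cont]] .
    show "AE x in \<mu>. (\<lambda>k. closed_cutoff C k (\<phi> x)) \<longlonglongrightarrow> indicator C (\<phi> x)"
      using closed_cutoff_tendsto_indicator[OF C] by simp
    show "AE x in \<mu>. norm (closed_cutoff C k (\<phi> x)) \<le> 1" for k
      by (simp add: closed_cutoff_def infdist_nonneg)
  qed simp
  also have "integral\<^sup>L \<mu> (\<lambda>x. indicator C (\<phi> x)) = integral\<^sup>L \<mu> (indicator (\<phi> -` C \<inter> space \<mu>))"
    by (intro Bochner_Integration.integral_cong) (auto simp: indicator_def)
  also have "\<dots> = measure \<mu> (\<phi> -` C \<inter> space \<mu>)"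
    using measurable_sets[OF \<phi> borel_closed[OF C(1)]] by (simp add: emeasure_eq_measure)
  finally show ?thesis .
qed

lemma invariant_on_closed_sets:
  fixes \<mu> :: "(real^'d) measure"
  assumes "prob_space \<mu>" and F: "F \<in> borel_measurable \<mu>"
    and test: "\<And>L f. lipschitz_test L f \<Longrightarrow> integral\<^sup>L \<mu> (\<lambda>x. f (F x)) = integral\<^sup>L \<mu> f"
    and id: "(\<lambda>x. x) \<in> borel_measurable \<mu>" and C: "closed C"
  shows "measure \<mu> (F -` C \<inter> space \<mu>) = measure \<mu> (C \<inter> space \<mu>)"
proof (cases "C = {}")
  case False
  have "(\<lambda>k. integral\<^sup>L \<mu> (\<lambda>x. closed_cutoff C k x)) \<longlonglongrightarrow> measure \<mu> (F -` C \<inter> space \<mu>)"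
    using integral_closed_cutoff_tendsto[OF assms(1) C False F]
    by (simp add: test[OF closed_cutoff_lipschitz_test])
  moreover have "(\<lambda>k. integral\<^sup>L \<mu> (\<lambda>x. closed_cutoff C k x)) \<longlonglongrightarrow> measure \<mu> (C \<inter> space \<mu>)"
    using integral_closed_cutoff_tendsto[OF assms(1) C False id] by simp
  ultimately show ?thesis by (rule LIMSEQ_unique)
qed simp

text \<open>Finite Borel measures agreeing on all closed sets are equal, since the closed sets
  form an intersection-stable generator of the Borel sets.\<close>

lemma finite_borel_measure_eq_on_closed:
  fixes N N' :: "'a::topological_space measure"
  assumes "sets N = sets borel" "sets N' = sets borel" "emeasure N UNIV \<noteq> \<infinity>"
    and closed_eq: "\<And>C. closed C \<Longrightarrow> emeasure N C = emeasure N' C"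
  shows "N = N'"
proof (rule measure_eqI_generator_eq[where \<Omega>=UNIV and E="Collect closed" and A="\<lambda>_. UNIV"])
  show "sets N = sigma_sets UNIV (Collect closed)" "sets N' = sigma_sets UNIV (Collect closed)"
    using assms(1,2) by (simp_all add: borel_eq_closed)
qed (use assms in \<open>auto simp: Int_stable_def\<close>)

text \<open>Hence equality of the measures of closed sets and their preimages extends to all
  Borel sets of M: it says that the image of mu under F and mu itself, both seen as Borel
  measures on the whole space, agree on closed sets.\<close>

lemma invariant_from_closed_sets:
  fixes \<mu> :: "(real^'d) measure"
  assumes "prob_space \<mu>" and S: "sets \<mu> = sets (borelM M)"
    and Fm: "F \<in> borelM M \<rightarrow>\<^sub>M borelM M"
    and closed_inv: "\<And>C. closed C \<Longrightarrow> measure \<mu> (F -` C \<inter> M) = measure \<mu> (C \<inter> M)"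
  shows "\<forall>\<Gamma>\<in>sets (borelM M). emeasure \<mu> (F -` \<Gamma> \<inter> M) = emeasure \<mu> \<Gamma>"
proof -
  interpret prob_space \<mu> by fact
  have sp: "space \<mu> = M" using sets_eq_imp_space_eq[OF S] by simp
  have FM: "x \<in> M \<Longrightarrow> F x \<in> M" for x using measurable_space[OF Fm] by simp
  have F_borel: "F \<in> \<mu> \<rightarrow>\<^sub>M borel"
    using Fm measurable_cong_sets[OF S refl] unfolding borelM_def measurable_restrict_space2_iff by blast
  have id_borel: "(\<lambda>x. x) \<in> \<mu> \<rightarrow>\<^sub>M borel"
    by (rule continuous_on_borelM_measurable[OF S continuous_on_id])
  define image where "image = distr \<mu> borel (\<lambda>x. x)"
  define pushforward where "pushforward = distr \<mu> borel F"
  have image: "emeasure image X = emeasure \<mu> (X \<inter> M)" if "X \<in> sets borel" for X :: "(real^'d) set"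
    unfolding image_def using emeasure_distr[OF id_borel that] sp by simp
  have push: "emeasure pushforward X = emeasure \<mu> (F -` X \<inter> M)" if "X \<in> sets borel" for X :: "(real^'d) set"
    unfolding pushforward_def using emeasure_distr[OF F_borel that] sp by simp
  have "image = pushforward"
  proof (rule finite_borel_measure_eq_on_closed)
    show "sets image = sets borel" "sets pushforward = sets borel"
      by (simp_all add: image_def pushforward_def)
    show "emeasure image UNIV \<noteq> \<infinity>" using image[of UNIV] by (simp add: emeasure_eq_measure)
    fix C :: "(real^'d) set" assume C: "closed C"
    have "C \<inter> M \<in> sets \<mu>" "F -` C \<inter> M \<in> sets \<mu>"
      using borelM_Int[OF borel_closed[OF C], of M] S measurable_sets[OF F_borel borel_closed[OF C]] sp
      by (simp_all add: Int_commute)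
    then show "emeasure image C = emeasure pushforward C"
      using image push borel_closed[OF C] closed_inv[OF C] by (simp add: emeasure_eq_measure)
  qed
  show ?thesis
  proof
    fix \<Gamma> assume "\<Gamma> \<in> sets (borelM M)"
    then obtain X where X: "X \<in> sets borel" "\<Gamma> = M \<inter> X"
      unfolding borelM_def sets_restrict_space by auto
    have "F -` \<Gamma> \<inter> M = F -` X \<inter> M" using X(2) FM by auto
    then have "emeasure \<mu> (F -` \<Gamma> \<inter> M) = emeasure pushforward X" using push[OF X(1)] by simp
    also have "\<dots> = emeasure image X" using \<open>image = pushforward\<close> by simp
    also have "\<dots> = emeasure \<mu> \<Gamma>" using image[OF X(1)] X(2) by (simp add: Int_commute)
    finally show "emeasure \<mu> (F -` \<Gamma> \<inter> M) = emeasure \<mu> \<Gamma>" .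
  qed
qed

lemma measure_preserving_funpow:
  assumes Fm: "F \<in> N \<rightarrow>\<^sub>M N"
    and pres: "\<And>A. A \<in> sets N \<Longrightarrow> emeasure N (F -` A \<inter> space N) = emeasure N A"
    and A: "A \<in> sets N"
  shows "emeasure N ((F ^^ n) -` A \<inter> space N) = emeasure N A"
proof (induction n)
  case 0
  show ?case using sets.sets_into_space[OF A] by (simp add: Int_absorb2)
next
  case (Suc n)
  have iter: "(F ^^ n) \<in> N \<rightarrow>\<^sub>M N" using Fm by (induction n) (auto intro: measurable_comp)
  have "(F ^^ Suc n) -` A \<inter> space N = F -` ((F ^^ n) -` A \<inter> space N) \<inter> space N"
    using measurable_space[OF Fm] by (auto simp: funpow_Suc_right simp del: funpow.simps)
  also have "emeasure N \<dots> = emeasure N ((F ^^ n) -` A \<inter> space N)"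
    using pres measurable_sets[OF iter A] by blast
  finally show ?case unfolding Suc.IH .
qed

lemma disjoint_family_equal_measure_zero:
  assumes "finite_measure N" and disj: "disjoint_family V"
    and V_sets: "\<And>k. V k \<in> sets N" and V_measure: "\<And>k::nat. measure N (V k) = c"
  shows "c = 0"
proof (rule ccontr)
  interpret finite_measure N by fact
  assume "c \<noteq> 0"
  then have "0 < c" using measure_nonneg[of N "V 0"] V_measure[of 0] by linarith
  then obtain m where m: "measure N (space N) < real m * c"
    using ex_less_of_nat_mult by blast
  have "real m * c = measure N (\<Union>k<m. V k)"
    using disj V_sets V_measure
    by (subst finite_measure_finite_Union) (auto simp: disjoint_family_on_def)
  also have "\<dots> \<le> measure N (space N)"
    using V_sets by (intro bounded_measure)
  finally show False using m by simp
qed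

lemma never_returning_preimages_disjoint:
  fixes F :: "'a \<Rightarrow> 'a" and A S :: "'a set"
  defines "W \<equiv> {x \<in> A. \<forall>n\<ge>1. (F ^^ n) x \<notin> A}"
  shows "disjoint_family (\<lambda>k. (F ^^ k) -` W \<inter> S)"
proof -
  have disj_lt: "(F ^^ j) -` W \<inter> (F ^^ k) -` W = {}" if "j < k" for j k
  proof (rule ccontr)
    assume "(F ^^ j) -` W \<inter> (F ^^ k) -` W \<noteq> {}"
    then obtain x where "(F ^^ j) x \<in> W" "(F ^^ k) x \<in> W" by blast
    moreover have "(F ^^ k) x = (F ^^ (k - j)) ((F ^^ j) x)"
      using that by (simp flip: funpow_add[unfolded comp_def, THEN fun_cong])
    ultimately show False using that unfolding W_def by auto
  qed
  show ?thesis
  proof (unfold disjoint_family_on_def, intro ballI impI)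
    fix j k :: nat assume "j \<noteq> k"
    then consider "j < k" | "k < j" by linarith
    then show "(F ^^ j) -` W \<inter> S \<inter> ((F ^^ k) -` W \<inter> S) = {}"
      using disj_lt by cases blast+
  qed
qed

text \<open>Poincare recurrence: for a measure-preserving map of a finite measure space, the
  points of a measurable set A that never come back to A form a null set, since the
  preimages of this set under the iterates are disjoint and of equal measure.\<close>

lemma poincare_recurrence:
  assumes "finite_measure N" and Fm: "F \<in> N \<rightarrow>\<^sub>M N"
    and pres: "\<And>A. A \<in> sets N \<Longrightarrow> emeasure N (F -` A \<inter> space N) = emeasure N A"
    and A: "A \<in> sets N"
  shows "{x \<in> A. \<forall>n\<ge>1. (F ^^ n) x \<notin> A} \<in> null_sets N"
proof -
  define W where "W = {x \<in> A. \<forall>n\<ge>1. (F ^^ n) x \<notin> A}"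
  have iter: "(F ^^ n) \<in> N \<rightarrow>\<^sub>M N" for n using Fm by (induction n) (auto intro: measurable_comp)
  have "(\<Inter>n\<in>{1..}. (F ^^ n) -` (space N - A) \<inter> space N) \<in> sets N"
    using measurable_sets[OF iter sets.compl_sets[OF A]] by (intro sets.countable_INT') auto
  moreover have "W = A \<inter> (\<Inter>n\<in>{1..}. (F ^^ n) -` (space N - A) \<inter> space N)"
    using sets.sets_into_space[OF A] measurable_space[OF iter] unfolding W_def by auto
  ultimately have W_sets: "W \<in> sets N" using A by simp
  have "measure N W = 0"
  proof (rule disjoint_family_equal_measure_zero[OF assms(1)])
    show "disjoint_family (\<lambda>k. (F ^^ k) -` W \<inter> space N)"
      unfolding W_def by (rule never_returning_preimages_disjoint)
    show "(F ^^ k) -` W \<inter> space N \<in> sets N" for k by (rule measurable_sets[OF iter W_sets])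
    show "measure N ((F ^^ k) -` W \<inter> space N) = measure N W" for k
      using measure_preserving_funpow[OF Fm pres W_sets] by (simp add: measure_def)
  qed
  then have "W \<in> null_sets N"
    using W_sets finite_measure.emeasure_eq_measure[OF assms(1)] by (simp add: null_sets_def)
  then show ?thesis unfolding W_def .
qed

lemma returning_orbit_pseudoorbit:
  assumes F0: "F ` M0 \<subseteq> M0" and F1: "F ` M1 \<subseteq> M1"
    and part: "M0 \<union> M1 = M" "M0 \<inter> M1 = {}"
    and x: "x \<in> M" and n: "n \<ge> 1" and close: "norm (x - (F ^^ n) x) < \<delta>" and \<delta>: "\<delta> > 0"
  shows "ap_pseudoorbit M M0 F \<delta> x x n (\<lambda>i. if i < n then (F ^^ i) x else x)"
proof -
  have orbit_M: "(F ^^ i) y \<in> M" if "y \<in> M" for y i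
    using that F0 F1 part by (induction i) auto
  have orbit_M1: "(F ^^ i) y \<in> M1" if "y \<in> M1" for y i
    using that F1 by (induction i) auto
  have back_M0: "x \<in> M0" if "(F ^^ i) x \<in> M0" for i
    using that orbit_M1[of x i] x part by auto
  have step: "dmax ((F ^^ Suc i) x) (F ((F ^^ i) x)) < \<delta>" for i
    using dmax_le_norm[of "(F ^^ Suc i) x" "F ((F ^^ i) x)"] \<delta> by simp
  obtain m where m: "n = Suc m" using n by (cases n) auto
  have jump: "dmax x (F ((F ^^ m) x)) < \<delta>"
    using dmax_le_norm[of x "F ((F ^^ m) x)"] close m by simp
  show ?thesis
    unfolding ap_pseudoorbit_def
  proof (intro conjI allI impI)
    fix i assume "i < n" "(if i < n then (F ^^ i) x else x) \<in> M0"
    then show "(if Suc i < n then (F ^^ Suc i) x else x) \<in> M0"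
      using back_M0[of i] F0 by auto
  next
    fix i assume "i < n"
    then show "dmax (if Suc i < n then (F ^^ Suc i) x else x) (F (if i < n then (F ^^ i) x else x)) < \<delta>"
      using step[of i] jump m by (cases "Suc i < n") (auto simp: less_Suc_eq)
  qed (use n x orbit_M[OF x] in auto)
qed

lemma returning_point_in_R_ap:
  assumes "F ` M0 \<subseteq> M0" "F ` M1 \<subseteq> M1" "M0 \<union> M1 = M" "M0 \<inter> M1 = {}" and x: "x \<in> M"
    and returns: "\<And>\<delta>. \<delta> > 0 \<Longrightarrow> \<exists>n\<ge>1. norm (x - (F ^^ n) x) < \<delta>"
  shows "x \<in> R_ap M M0 F"
  unfolding R_ap_def using x returns returning_orbit_pseudoorbit[OF assms(1-5)] by blast

text \<open>For an invariant finite Borel measure, almost every point returns arbitrarily close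
  to itself: the non-returning points lie in the union, over a countable basis of the
  topology, of the Poincare null sets.\<close>

lemma almost_every_point_returns:
  fixes M :: "(real^'d) set"
  assumes "finite_measure \<mu>" and S: "sets \<mu> = sets (borelM M)"
    and Fm: "F \<in> borelM M \<rightarrow>\<^sub>M borelM M"
    and inv: "\<forall>\<Gamma>\<in>sets (borelM M). emeasure \<mu> (F -` \<Gamma> \<inter> M) = emeasure \<mu> \<Gamma>"
  obtains Z where "Z \<in> null_sets \<mu>"
    and "\<And>x \<delta>. x \<in> M - Z \<Longrightarrow> \<delta> > 0 \<Longrightarrow> \<exists>n\<ge>1. norm (x - (F ^^ n) x) < \<delta>"
proof -
  have sp: "space \<mu> = M" using sets_eq_imp_space_eq[OF S] by simp
  have Fm\<mu>: "F \<in> \<mu> \<rightarrow>\<^sub>M \<mu>" using Fm by (simp add: measurable_cong_sets[OF S S])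
  have pres: "emeasure \<mu> (F -` A \<inter> space \<mu>) = emeasure \<mu> A" if "A \<in> sets \<mu>" for A
    using inv that S sp by simp
  obtain B :: "(real^'d) set set" where B: "countable B" "\<And>C. C \<in> B \<Longrightarrow> open C"
      "\<And>S. open S \<Longrightarrow> \<exists>U\<subseteq>B. S = \<Union>U"
    using univ_second_countable by blast
  define Z where "Z = (\<Union>b\<in>B. {x \<in> M \<inter> b. \<forall>n\<ge>1. (F ^^ n) x \<notin> M \<inter> b})"
  have "Z \<in> null_sets \<mu>"
    unfolding Z_def
  proof (intro null_sets_UN' B(1))
    fix b assume "b \<in> B"
    then have "M \<inter> b \<in> sets \<mu>" using borelM_Int[of b M] B(2) S by simp
    then show "{x \<in> M \<inter> b. \<forall>n\<ge>1. (F ^^ n) x \<notin> M \<inter> b} \<in> null_sets \<mu>"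
      using poincare_recurrence[OF assms(1) Fm\<mu> pres] by blast
  qed
  moreover have "\<exists>n\<ge>1. norm (x - (F ^^ n) x) < \<delta>" if x: "x \<in> M - Z" and \<delta>: "\<delta> > 0" for x \<delta>
  proof -
    obtain U where U: "U \<subseteq> B" "ball x \<delta> = \<Union>U" using B(3)[of "ball x \<delta>"] by auto
    then obtain b where "b \<in> U" "x \<in> b" using \<delta> by (metis UnionE centre_in_ball)
    then have b: "b \<in> B" "x \<in> b" "b \<subseteq> ball x \<delta>" using U by auto
    then obtain n where "n \<ge> 1" "(F ^^ n) x \<in> b" using x unfolding Z_def by blast
    then have "n \<ge> 1 \<and> norm (x - (F ^^ n) x) < \<delta>" using b by (auto simp: dist_norm)
    then show ?thesis by blast
  qed
  ultimately show ?thesis using that by blast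
qed

lemma invariant_measure_on_closure_R_ap:
  fixes M :: "(real^'d) set"
  assumes "finite_measure \<mu>" and S: "sets \<mu> = sets (borelM M)"
    and Fm: "F \<in> borelM M \<rightarrow>\<^sub>M borelM M"
    and inv: "\<forall>\<Gamma>\<in>sets (borelM M). emeasure \<mu> (F -` \<Gamma> \<inter> M) = emeasure \<mu> \<Gamma>"
    and F0: "F ` M0 \<subseteq> M0" and F1: "F ` M1 \<subseteq> M1" and part: "M0 \<union> M1 = M" "M0 \<inter> M1 = {}"
  shows "emeasure \<mu> (M - closure (R_ap M M0 F)) = 0"
proof -
  obtain Z where Z: "Z \<in> null_sets \<mu>"
    and returns: "\<And>x \<delta>. x \<in> M - Z \<Longrightarrow> \<delta> > 0 \<Longrightarrow> \<exists>n\<ge>1. norm (x - (F ^^ n) x) < \<delta>"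
    using almost_every_point_returns[OF assms(1-4)] by blast
  have "M - Z \<subseteq> R_ap M M0 F"
    using returning_point_in_R_ap[OF F0 F1 part] returns by blast
  then have "M - closure (R_ap M M0 F) \<subseteq> Z" using closure_subset by blast
  moreover have "M - closure (R_ap M M0 F) \<in> sets \<mu>"
    using borelM_Int[of "- closure (R_ap M M0 F)" M] S by (simp add: Diff_eq)
  ultimately have "M - closure (R_ap M M0 F) \<in> null_sets \<mu>" by (intro null_sets_subset[OF Z])
  then show ?thesis by auto
qed

theorem mainTheorem8:
  fixes M M0 M1 :: "(real^'d) set"
    and F :: "real^'d \<Rightarrow> real^'d"
    and K :: "real \<Rightarrow> real^'d \<Rightarrow> (real^'d) measure"
    and \<epsilon> :: "nat \<Rightarrow> real"
    and \<mu>s :: "nat \<Rightarrow> (real^'d) measure"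
    and lam :: "nat \<Rightarrow> real"
    and \<mu> :: "(real^'d) measure"
  assumes M_closed: "closed M"
    and F_cont: "continuous_on M F"
    and F_maps: "F ` M \<subseteq> M"
    and F_bdd: "bounded (F ` M)"
    and kernel: "\<And>e. e > 0 \<Longrightarrow> K e \<in> borelM M \<rightarrow>\<^sub>M prob_algebra (borelM M)"
    and SH1: "\<And>\<delta>. \<delta> > 0 \<Longrightarrow>
      ((\<lambda>e. SUP x\<in>M. measure (K e x) (M - nbhd M \<delta> {F x})) \<longlongrightarrow> 0) (at_right 0)"
    and SH2_part: "M0 \<union> M1 = M" "M0 \<inter> M1 = {}"
    and SH2_closed: "closed M0"
    and SH2_inv0: "F ` M0 \<subseteq> M0"
    and SH2_inv1: "F ` M1 \<subseteq> M1"
    and SH2_abs: "\<And>e x. e > 0 \<Longrightarrow> x \<in> M0 \<Longrightarrow> measure (K e x) M1 = 0"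
    and eps_pos: "\<And>n. \<epsilon> n > 0"
    and eps_dec: "decseq \<epsilon>"
    and eps_lim: "\<epsilon> \<longlonglongrightarrow> 0"
    and qsd: "\<And>n. is_qsd M M1 (K (\<epsilon> n)) (\<mu>s n) (lam n)"
    and mu_prob: "prob_space \<mu>" "sets \<mu> = sets (borelM M)"
    and weak: "weak_conv_on M \<mu>s \<mu>"
    and lam_lim: "lam \<longlonglongrightarrow> 1"
  shows "(\<forall>\<Gamma>\<in>sets (borelM M). emeasure \<mu> (F -` \<Gamma> \<inter> M) = emeasure \<mu> \<Gamma>)
       \<and> emeasure \<mu> (M - closure (R_ap M M0 F)) = 0"
proof -
  have "M1 = M \<inter> - M0" using SH2_part by auto
  then have M1: "M1 \<in> sets (borelM M)"
    using borelM_Int[OF borel_open[OF open_Compl[OF SH2_closed]]] by simp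
  have Fm: "F \<in> borelM M \<rightarrow>\<^sub>M borelM M"
    unfolding borelM_def using F_maps borel_measurable_continuous_on_restrict[OF F_cont]
    by (intro measurable_restrict_space2) (auto simp: space_restrict_space)
  have sp: "space \<mu> = M" using sets_eq_imp_space_eq[OF mu_prob(2)] by simp
  have lipschitz_inv: "integral\<^sup>L \<mu> (\<lambda>x. f (F x)) = integral\<^sup>L \<mu> f" if "lipschitz_test L f" for L f
    by (rule qsd_limit_integral_invariant[OF F_cont kernel SH1 M1 eps_pos eps_lim qsd weak lam_lim that])
  have F_meas: "F \<in> borel_measurable \<mu>" and id_meas: "(\<lambda>x. x) \<in> borel_measurable \<mu>"
    using continuous_on_borelM_measurable[OF mu_prob(2)] F_cont continuous_on_id by blast+
  have "measure \<mu> (F -` C \<inter> M) = measure \<mu> (C \<inter> M)" if "closed C" for C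
    using invariant_on_closed_sets[OF mu_prob(1) F_meas lipschitz_inv id_meas that] sp by simp
  then have inv: "\<forall>\<Gamma>\<in>sets (borelM M). emeasure \<mu> (F -` \<Gamma> \<inter> M) = emeasure \<mu> \<Gamma>"
    by (rule invariant_from_closed_sets[OF mu_prob Fm])
  moreover have "emeasure \<mu> (M - closure (R_ap M M0 F)) = 0"
    using mu_prob(1) unfolding prob_space_def
    by (intro invariant_measure_on_closure_R_ap[OF _ mu_prob(2) Fm inv SH2_inv0 SH2_inv1 SH2_part]) blast
  ultimately show ?thesis by blast
qed

end
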